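(* Let $0<b<a<n$, let $\ell\in\{-1,1\}^n$, and let $A$ be the adjacency matrix of $SBM(a/n,b/n)$ with communities labelled by $\ell$. Let $C=(\sqrt a-\sqrt b)^2$, $L=\ell\ell^T$, and let $0<\beta<10^{-6}$, $\kappa\ge1$. Define $Q=C/2-\log(1/\beta)-3\kappa$. Then with probability at least $1-e^{-\kappa\beta n}-1/n^3$, for all $x_1,\dots,x_n\in[0,1]$ with $x_1+\dots+x_n=\beta n$, \[ \Big\langle (A-D(a/n,b/n)J)\odot L,\ X\Big\rangle\ \ge\ 2\beta n\Big(\frac{Q}{\log R(a/n,b/n)}-\sqrt{a+b}\Big), \] where $X$ is the $n\times n$ matrix with $X_{ij}=x_i$.
   Context: $SBM(a/n,b/n)$ with communities labelled by $\ell\in\{-1,1\}^n$: the adjacency matrix $A$ is symmetric with zero diagonal, and the entries $A_{ij}$, $i<j$, are independent Bernoulli with mean $a/n$ if $\ell_i=\ell_j$ and $b/n$ otherwise. $J$ is the all-ones matrix, $\odot$ is the entrywise (Hadamard) product, and $\langle X,Y\rangle=\sum_{i,j}X_{ij}Y_{ij}$. $R(p,q)=\frac{p(1-q)}{q(1-p)}$ and $D(p,q)=\log\frac{1-q}{1-p}\big/\log R(p,q)$. *)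

theory Defs
  imports "HOL-Probability.Probability"
begin

(* Vertices are 0..n-1; labels l :: nat => real with l i in {-1,1}. *)

definition Rfun :: "real \<Rightarrow> real \<Rightarrow> real" where
  "Rfun p q = (p * (1 - q)) / (q * (1 - p))"

definition Dfun :: "real \<Rightarrow> real \<Rightarrow> real" where
  "Dfun p q = ln ((1 - q) / (1 - p)) / ln (Rfun p q)"

definition sbm_edges :: "nat \<Rightarrow> real \<Rightarrow> real \<Rightarrow> (nat \<Rightarrow> real) \<Rightarrow> (nat \<times> nat \<Rightarrow> bool) pmf" where
  "sbm_edges n a b l =
     Pi_pmf {(i, j). i < j \<and> j < n} False
       (\<lambda>(i, j). bernoulli_pmf (if l i = l j then a / real n else b / real n))"

definition adj :: "(nat \<times> nat \<Rightarrow> bool) \<Rightarrow> nat \<Rightarrow> nat \<Rightarrow> real" where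
  "adj e i j = (if i < j then (if e (i, j) then 1 else 0)
               else if j < i then (if e (j, i) then 1 else 0) else 0)"

(* SBM(a/n,b/n): distribution of the adjacency matrix (entries outside [0,n) are 0) *)
definition SBM :: "nat \<Rightarrow> real \<Rightarrow> real \<Rightarrow> (nat \<Rightarrow> real) \<Rightarrow> (nat \<Rightarrow> nat \<Rightarrow> real) pmf" where
  "SBM n a b l = map_pmf adj (sbm_edges n a b l)"

definition frob :: "nat \<Rightarrow> (nat \<Rightarrow> nat \<Rightarrow> real) \<Rightarrow> (nat \<Rightarrow> nat \<Rightarrow> real) \<Rightarrow> real" where
  "frob n M N = (\<Sum>i<n. \<Sum>j<n. M i j * N i j)"

end

theory Submission
  imports Defs
begin

text \<open>
  Write \<open>s i A = (\<Sum>j<n. (A i j - D) * l i * l j)\<close>, so that the inner product in the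
  theorem is \<open>\<Sum>i<n. x i * s i A\<close>. With \<open>k = max 1 \<lfloor>\<beta> n\<rfloor>\<close>, if every \<open>k\<close>-subset \<open>S\<close>
  of the vertices has \<open>(\<Sum>i\<in>S. s i A) \<ge> k t\<close>, then comparing \<open>x\<close> with the indicator of
  the \<open>k\<close> smallest scores gives \<open>(\<Sum>i<n. x i * s i A) \<ge> \<beta> n t\<close>. So it suffices to bound
  the probability that a fixed \<open>k\<close>-set fails, and to pay \<open>n choose k \<le> (\<beta> n)^k / k! * \<beta>^-k\<close>
  in a union bound. The sum over \<open>S\<close> is a weighted sum of independent edge indicators, each
  edge counted as often as it has endpoints in \<open>S\<close>. In a Chernoff bound with parameter
  \<open>\<theta> L\<close>, \<open>L = log R\<close>, the factor of one edge is a Hellinger integral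
  \<open>p powr (1-\<theta>) * q powr \<theta> + (1-p) powr (1-\<theta>) * (1-q) powr \<theta>\<close>, which is at most
  \<open>exp (-\<theta> (\<surd>p - \<surd>q)\<^sup>2)\<close> for \<open>\<theta> \<le> 1/2\<close> and equals 1 for \<open>\<theta> = 1\<close>. Taking \<open>\<theta> = 1/2\<close>
  (edges inside \<open>S\<close> then cost nothing) when \<open>k\<close> is small and \<open>\<theta> = 1/4\<close> otherwise beats the
  union bound in both regimes.
\<close>

definition hellinger :: "real \<Rightarrow> real \<Rightarrow> real \<Rightarrow> real" where
  "hellinger \<theta> p q = p powr (1 - \<theta>) * q powr \<theta> + (1 - p) powr (1 - \<theta>) * (1 - q) powr \<theta>"

lemma powr_mult_powr_le:
  fixes x y \<theta> :: real
  assumes "0 < x" "0 < y" "0 \<le> \<theta>" "\<theta> \<le> 1/2"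
  shows "x powr (1 - \<theta>) * y powr \<theta> \<le> (1 - 2 * \<theta>) * x + 2 * \<theta> * sqrt (x * y)"
proof -
  have "x powr (1 - \<theta>) * y powr \<theta> = exp ((1 - 2 * \<theta>) * ln x + (2 * \<theta>) * ((ln x + ln y) / 2))"
    using assms by (simp add: powr_def exp_add[symmetric] algebra_simps)
  also have "\<dots> \<le> (1 - 2 * \<theta>) * exp (ln x) + (2 * \<theta>) * exp ((ln x + ln y) / 2)"
    using convex_onD[OF exp_convex, of "2 * \<theta>" "ln x" "(ln x + ln y) / 2"] assms by simp
  also have "exp ((ln x + ln y) / 2) = sqrt (x * y)"
    using assms by (simp add: ln_mult powr_half_sqrt[symmetric] powr_def)
  finally show ?thesis using assms by simp
qed

context
  fixes p q :: real
  assumes p: "0 < p" "p < 1" and q: "0 < q" "q < 1"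
begin

lemma hellinger_1: "hellinger 1 p q = 1"
  using p q by (simp add: hellinger_def)

lemma hellinger_half: "hellinger (1/2) p q = sqrt (p * q) + sqrt ((1 - p) * (1 - q))"
  using p q by (simp add: hellinger_def powr_half_sqrt real_sqrt_mult)

lemma hellinger_half_le: "hellinger (1/2) p q \<le> 1 - (sqrt p - sqrt q)\<^sup>2 / 2"
proof -
  have "sqrt ((1 - p) * (1 - q)) \<le> ((1 - p) + (1 - q)) / 2"
    using arith_geo_mean_sqrt[of "1 - p" "1 - q"] p q by simp
  moreover have "sqrt (p * q) = (p + q) / 2 - (sqrt p - sqrt q)\<^sup>2 / 2"
    using p q by (simp add: power2_eq_square field_simps real_sqrt_mult)
  ultimately show ?thesis
    unfolding hellinger_half by argo
qed

lemma hellinger_le: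
  assumes "0 \<le> \<theta>" "\<theta> \<le> 1/2"
  shows "hellinger \<theta> p q \<le> exp (- \<theta> * (sqrt p - sqrt q)\<^sup>2)"
proof -
  have "hellinger \<theta> p q
      \<le> (1 - 2 * \<theta>) * (p + (1 - p)) + 2 * \<theta> * (sqrt (p * q) + sqrt ((1 - p) * (1 - q)))"
    using add_mono[OF powr_mult_powr_le[of p q \<theta>] powr_mult_powr_le[of "1 - p" "1 - q" \<theta>]] p q assms
    unfolding hellinger_def by argo
  also have "\<dots> \<le> 1 - \<theta> * (sqrt p - sqrt q)\<^sup>2"
    using mult_left_mono[OF hellinger_half_le, of "2 * \<theta>"] assms
    unfolding hellinger_half by (simp add: algebra_simps)
  also have "\<dots> \<le> exp (- \<theta> * (sqrt p - sqrt q)\<^sup>2)"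
    using exp_ge_add_one_self[of "- \<theta> * (sqrt p - sqrt q)\<^sup>2"] by simp
  finally show ?thesis .
qed

end

lemma mult_exp_ln_diff:
  fixes x y \<theta> :: real
  assumes "0 < x" "0 < y"
  shows "x * exp (\<theta> * (ln y - ln x)) = x powr (1 - \<theta>) * y powr \<theta>"
proof -
  have "x * exp (\<theta> * (ln y - ln x)) = exp (ln x + \<theta> * (ln y - ln x))"
    using assms by (simp add: exp_add)
  then show ?thesis
    using assms by (simp add: powr_def exp_add[symmetric] algebra_simps)
qed

context
  fixes p q :: real
  assumes q: "0 < q" and qp: "q < p" and p: "p < 1"
begin

lemma ln_Rfun_eq: "ln (Rfun p q) = (ln p - ln q) + (ln (1 - q) - ln (1 - p))"
  using q qp p by (simp add: Rfun_def ln_div ln_mult)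

lemma ln_ratio_le_ln_Rfun: "ln p - ln q \<le> ln (Rfun p q)"
  using q qp p by (simp add: ln_Rfun_eq)

lemma ln_Rfun_pos: "0 < ln (Rfun p q)"
proof -
  have "ln q < ln p" "ln (1 - p) < ln (1 - q)"
    using q qp p by simp_all
  then show ?thesis
    by (simp add: ln_Rfun_eq)
qed

lemma ln_Rfun_mult_Dfun: "ln (Rfun p q) * Dfun p q = ln (1 - q) - ln (1 - p)"
  using q qp p ln_Rfun_pos by (simp add: Dfun_def ln_div)

lemma ln_Rfun_mult_one_minus_Dfun: "ln (Rfun p q) * (1 - Dfun p q) = ln p - ln q"
  using ln_Rfun_eq ln_Rfun_mult_Dfun by (simp add: right_diff_distrib)

text \<open>By \<open>ln t \<le> t - 1\<close> applied to \<open>(1-q)/(1-p)\<close> and to \<open>q/p\<close>.\<close>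
lemma Dfun_le: "Dfun p q \<le> p"
proof -
  have "(1 - p) * (ln (1 - q) - ln (1 - p)) \<le> p - q"
    using ln_le_minus_one[of "(1 - q) / (1 - p)"] q qp p
    by (simp add: ln_div mult_left_mono[of _ _ "1 - p", simplified] field_simps)
  moreover have "p * (ln q - ln p) \<le> q - p"
    using ln_le_minus_one[of "q / p"] q qp
    by (simp add: ln_div mult_left_mono[of _ _ p, simplified] field_simps)
  ultimately have "ln (Rfun p q) * Dfun p q \<le> p * ln (Rfun p q)"
    unfolding ln_Rfun_mult_Dfun unfolding ln_Rfun_eq
    by (simp add: algebra_simps)
  then show ?thesis
    using ln_Rfun_pos by (simp add: mult.commute)
qed

lemma ln_Rfun_exponents:
  "\<theta> * ln (Rfun p q) * (1 - Dfun p q) = \<theta> * (ln p - ln q)"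
  "\<theta> * ln (Rfun p q) * Dfun p q = \<theta> * (ln (1 - q) - ln (1 - p))"
  by (simp_all only: mult.assoc ln_Rfun_mult_one_minus_Dfun ln_Rfun_mult_Dfun)

lemma expectation_exp_same_community:
  "measure_pmf.expectation (bernoulli_pmf p)
     (\<lambda>v. exp (- (\<theta> * ln (Rfun p q) * (of_bool v - Dfun p q)))) = hellinger \<theta> p q"
proof -
  have "measure_pmf.expectation (bernoulli_pmf p)
      (\<lambda>v. exp (- (\<theta> * ln (Rfun p q) * (of_bool v - Dfun p q))))
    = exp (- (\<theta> * ln (Rfun p q) * (1 - Dfun p q))) * p
      + exp (- (\<theta> * ln (Rfun p q) * (0 - Dfun p q))) * (1 - p)"
    using q qp p by (subst integral_bernoulli_pmf) simp_all
  also have "\<dots> = exp (- (\<theta> * (ln p - ln q))) * p + exp (\<theta> * (ln (1 - q) - ln (1 - p))) * (1 - p)"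
    by (simp only: diff_0 mult_minus_right minus_minus ln_Rfun_exponents)
  also have "\<dots> = hellinger \<theta> p q"
    using q qp p mult_exp_ln_diff[of p q \<theta>] mult_exp_ln_diff[of "1 - p" "1 - q" \<theta>]
    by (simp add: hellinger_def algebra_simps)
  finally show ?thesis .
qed

lemma expectation_exp_other_community:
  "measure_pmf.expectation (bernoulli_pmf q)
     (\<lambda>v. exp (\<theta> * ln (Rfun p q) * (of_bool v - Dfun p q))) = hellinger \<theta> q p"
proof -
  have "measure_pmf.expectation (bernoulli_pmf q)
      (\<lambda>v. exp (\<theta> * ln (Rfun p q) * (of_bool v - Dfun p q)))
    = exp (\<theta> * ln (Rfun p q) * (1 - Dfun p q)) * q
      + exp (\<theta> * ln (Rfun p q) * (0 - Dfun p q)) * (1 - q)"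
    using q qp p by (subst integral_bernoulli_pmf) simp_all
  also have "\<dots> = exp (\<theta> * (ln p - ln q)) * q + exp (- (\<theta> * (ln (1 - q) - ln (1 - p)))) * (1 - q)"
    by (simp only: diff_0 mult_minus_right ln_Rfun_exponents)
  also have "\<dots> = hellinger \<theta> q p"
    using q qp p mult_exp_ln_diff[of q p \<theta>] mult_exp_ln_diff[of "1 - q" "1 - p" \<theta>]
    by (simp add: hellinger_def algebra_simps)
  finally show ?thesis .
qed

end

lemma power_div_fact_le_exp:
  fixes x :: real
  assumes "0 \<le> x"
  shows "x ^ k / fact k \<le> exp x"
proof -
  have "(\<Sum>i\<in>{k}. x ^ i / fact i) \<le> (\<Sum>i. x ^ i / fact i)"
    using summable_exp_generic[of x] assms
    by (intro sum_le_suminf) (auto simp: divide_inverse ac_simps)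
  then show ?thesis
    by (simp add: exp_def divide_inverse ac_simps)
qed

lemma power_div_fact_mult_exp_le:
  fixes m :: real
  assumes m: "0 < m" "m < real k + 1" and k: "1 \<le> k"
  shows "m ^ k / fact k * exp m \<le> exp (3 * real k)"
proof (cases "k = 1")
  case True
  have "m * exp m \<le> 2 * exp 2"
    using m True by (intro mult_mono) auto
  also have "\<dots> \<le> exp 1 * exp 2"
    using exp_ge_add_one_self[of 1] by (intro mult_right_mono) auto
  finally show ?thesis
    using True by (simp add: mult_exp_exp)
next
  case False
  have "m ^ k / fact k \<le> real (Suc k) ^ k / fact k"
    using m by (intro divide_right_mono power_mono) auto
  also have "\<dots> = real (Suc k) ^ Suc k / fact (Suc k)"
    by simp
  also have "\<dots> \<le> exp (real (Suc k))"
    by (rule power_div_fact_le_exp) simp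
  finally have "m ^ k / fact k * exp m \<le> exp (real (Suc k)) * exp (real (Suc k))"
    using m by (intro mult_mono) auto
  also have "\<dots> \<le> exp (3 * real k)"
    using False k by (simp add: mult_exp_exp)
  finally show ?thesis .
qed

lemma power_div_fact_tail_le:
  fixes m \<kappa> s :: real
  assumes m: "0 < m" "m < real k + 1" and k: "1 \<le> k"
    and \<kappa>: "1 \<le> \<kappa>" and s: "m \<le> s * real k" "s \<le> 3"
  shows "m ^ k / fact k * exp (- (\<kappa> * s + 3 - s) * real k) \<le> exp (- \<kappa> * m)"
proof -
  have "m ^ k / fact k * exp (- (\<kappa> * s + 3 - s) * real k)
      = m ^ k / fact k * exp m * exp (- m - (\<kappa> * s + 3 - s) * real k)"
    by (simp add: mult_exp_exp algebra_simps)
  also have "\<dots> \<le> exp (3 * real k) * exp (- m - (\<kappa> * s + 3 - s) * real k)"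
    using power_div_fact_mult_exp_le[OF m k] by (intro mult_right_mono) auto
  also have "\<dots> = exp (s * real k - m - \<kappa> * (s * real k))"
    by (simp add: mult_exp_exp algebra_simps)
  also have "\<dots> \<le> exp (- \<kappa> * m)"
    using mult_right_mono[OF \<kappa>, of "s * real k - m"] s by (simp add: algebra_simps)
  finally show ?thesis .
qed

lemma choose_le_power_div_fact: "real (n choose k) \<le> real n ^ k / fact k"
proof -
  have "real (n choose k) * fact k \<le> real n ^ k"
    using binomial_fact_pow[of n k] by (metis of_nat_fact of_nat_le_iff of_nat_mult of_nat_power)
  then show ?thesis
    by (simp add: field_simps)
qed

lemma choose_mult_exp_le:
  fixes \<beta> \<kappa> s X :: real
  assumes \<beta>: "0 < \<beta>" and m: "0 < \<beta> * real n" "\<beta> * real n < real k + 1" and k: "1 \<le> k"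
    and \<kappa>: "1 \<le> \<kappa>" and s: "\<beta> * real n \<le> s * real k" "s \<le> 3"
    and X: "X \<le> - (ln (1 / \<beta>) + \<kappa> * s + 3 - s)"
  shows "real (n choose k) * exp (real k * X) \<le> exp (- \<kappa> * (\<beta> * real n))"
proof -
  have pow_eq: "real n ^ k / fact k = (\<beta> * real n) ^ k / fact k * exp (real k * ln (1 / \<beta>))"
    using \<beta> by (simp add: exp_of_nat_mult power_mult_distrib power_one_over field_simps)
  have "real k * X \<le> - real k * (ln (1 / \<beta>) + \<kappa> * s + 3 - s)"
    using mult_left_mono[OF X, of "real k"] by (simp add: algebra_simps)
  then have "real (n choose k) * exp (real k * X)
      \<le> real n ^ k / fact k * exp (- real k * (ln (1 / \<beta>) + \<kappa> * s + 3 - s))"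
    by (intro mult_mono choose_le_power_div_fact) auto
  also have "\<dots> = (\<beta> * real n) ^ k / fact k
      * (exp (real k * ln (1 / \<beta>)) * exp (- real k * (ln (1 / \<beta>) + \<kappa> * s + 3 - s)))"
    unfolding pow_eq by (simp only: ac_simps)
  also have "\<dots> = (\<beta> * real n) ^ k / fact k * exp (- (\<kappa> * s + 3 - s) * real k)"
    by (simp add: mult_exp_exp algebra_simps)
  also have "\<dots> \<le> exp (- \<kappa> * (\<beta> * real n))"
    by (rule power_div_fact_tail_le[OF m k \<kappa> s])
  finally show ?thesis .
qed

lemma sum_square_eq_diag_plus_pairs:
  fixes g :: "nat \<Rightarrow> nat \<Rightarrow> 'a::comm_monoid_add"
  shows "(\<Sum>i<n. \<Sum>j<n. g i j) = (\<Sum>i<n. g i i) + (\<Sum>j<n. \<Sum>i<j. g i j + g j i)"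
proof (induction n)
  case 0
  then show ?case by simp
next
  case (Suc n)
  have "(\<Sum>i<Suc n. \<Sum>j<Suc n. g i j)
      = (\<Sum>i<n. \<Sum>j<n. g i j) + ((\<Sum>i<n. g i n) + (\<Sum>j<n. g n j)) + g n n"
    by (simp add: sum.distrib ac_simps)
  also have "\<dots> = (\<Sum>i<Suc n. g i i) + (\<Sum>j<Suc n. \<Sum>i<j. g i j + g j i)"
    using Suc by (simp add: sum.distrib ac_simps)
  finally show ?case .
qed

lemma exists_subset_of_smallest:
  fixes s :: "'a \<Rightarrow> real"
  assumes "finite U" "k \<le> card U"
  shows "\<exists>T\<subseteq>U. card T = k \<and> (\<forall>i\<in>T. \<forall>j\<in>U - T. s i \<le> s j)"
  using assms(2)
proof (induction k)
  case 0
  then show ?case by auto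
next
  case (Suc k)
  then obtain T where T: "T \<subseteq> U" "card T = k" "\<forall>i\<in>T. \<forall>j\<in>U - T. s i \<le> s j"
    by auto
  have "finite T"
    using T(1) assms(1) finite_subset by blast
  with Suc.prems T have "U - T \<noteq> {}"
    by (metis Diff_eq_empty_iff card_mono not_less_eq_eq)
  then obtain j0 where j0: "j0 \<in> U - T" "\<forall>j\<in>U - T. s j0 \<le> s j"
    using assms(1) by (metis arg_min_if_finite finite_Diff not_le)
  show ?case
    using T j0 \<open>finite T\<close> by (intro exI[of _ "insert j0 T"]) auto
qed

lemma sum_mult_ge_lowest:
  fixes s x :: "nat \<Rightarrow> real"
  assumes T: "T \<subseteq> {..<n}"
    and below: "\<And>i. i \<in> T \<Longrightarrow> s i \<le> \<mu>" and above: "\<And>j. j < n \<Longrightarrow> j \<notin> T \<Longrightarrow> \<mu> \<le> s j"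
    and x: "\<forall>i<n. 0 \<le> x i \<and> x i \<le> 1"
  shows "(\<Sum>i\<in>T. s i) + ((\<Sum>i<n. x i) - real (card T)) * \<mu> \<le> (\<Sum>i<n. x i * s i)"
proof -
  have T_eq: "(\<Sum>i\<in>T. f i) = (\<Sum>i<n. of_bool (i \<in> T) * f i)" for f :: "nat \<Rightarrow> real"
    using T by (simp add: Int_absorb1)
  have "(\<Sum>i<n. (x i - of_bool (i \<in> T)) * \<mu>) \<le> (\<Sum>i<n. (x i - of_bool (i \<in> T)) * s i)"
  proof (intro sum_mono)
    fix i assume "i \<in> {..<n}"
    then show "(x i - of_bool (i \<in> T)) * \<mu> \<le> (x i - of_bool (i \<in> T)) * s i"
      using x below[of i] above[of i] by (cases "i \<in> T") (auto intro: mult_left_mono_neg mult_left_mono)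
  qed
  then show ?thesis
    using T_eq[of s] T_eq[of "\<lambda>_. 1"]
    by (simp add: left_diff_distrib sum_subtractf sum_distrib_right[symmetric])
qed

lemma weighted_sum_ge_of_subset_sums:
  fixes s x :: "nat \<Rightarrow> real"
  assumes k: "1 \<le> k" "k \<le> n" "real k \<le> m \<or> k = 1"
    and subset_sums: "\<And>S. S \<subseteq> {..<n} \<Longrightarrow> card S = k \<Longrightarrow> real k * t \<le> (\<Sum>i\<in>S. s i)"
    and x: "\<forall>i<n. 0 \<le> x i \<and> x i \<le> 1" and mass: "(\<Sum>i<n. x i) = m"
  shows "m * t \<le> (\<Sum>i<n. x i * s i)"
proof (cases "k = 1")
  case True
  then have "t \<le> s i" if "i < n" for i
    using subset_sums[of "{i}"] that by simp
  then have "(\<Sum>i<n. x i * t) \<le> (\<Sum>i<n. x i * s i)"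
    using x by (intro sum_mono mult_left_mono) auto
  then show ?thesis
    using mass by (simp add: sum_distrib_right[symmetric])
next
  case False
  obtain T where T: "T \<subseteq> {..<n}" "card T = k" "\<forall>i\<in>T. \<forall>j\<in>{..<n} - T. s i \<le> s j"
    using exists_subset_of_smallest[of "{..<n}" k s] k by auto
  then have "finite T" "T \<noteq> {}"
    using finite_subset[OF T(1)] k by auto
  define \<mu> where "\<mu> = Max (s ` T)"
  have below: "s i \<le> \<mu>" if "i \<in> T" for i
    using that \<open>finite T\<close> by (simp add: \<mu>_def)
  have "\<mu> \<in> s ` T"
    unfolding \<mu>_def using \<open>finite T\<close> \<open>T \<noteq> {}\<close> by (intro Max_in) auto
  then obtain i0 where "i0 \<in> T" "\<mu> = s i0"
    by auto
  then have above: "\<mu> \<le> s j" if "j < n" "j \<notin> T" for j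
    using T(3) that by auto
  have "real k * t \<le> real k * \<mu>"
    using subset_sums[OF T(1,2)] sum_mono[of T s "\<lambda>_. \<mu>", OF below] T(2) by simp
  then have "(m - real k) * t \<le> (m - real k) * \<mu>"
    using False k by (intro mult_left_mono) auto
  moreover have "(\<Sum>i\<in>T. s i) + (m - real k) * \<mu> \<le> (\<Sum>i<n. x i * s i)"
    using sum_mult_ge_lowest[of T n s \<mu> x] T(1,2) below above x mass by blast
  ultimately show ?thesis
    using subset_sums[OF T(1,2)] by (simp add: algebra_simps)
qed

definition pairs :: "nat \<Rightarrow> (nat \<times> nat) set" where
  "pairs n = {(i, j). i < j \<and> j < n}"

lemma finite_pairs: "finite (pairs n)"
  by (rule finite_subset[of _ "{..<n} \<times> {..<n}"]) (auto simp: pairs_def)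

lemma sum_pairs: "(\<Sum>x\<in>pairs n. f x) = (\<Sum>j<n. \<Sum>i<j. f (i, j))"
proof -
  have "pairs n = (\<lambda>(j, i). (i, j)) ` (SIGMA j:{..<n}. {..<j})"
    by (auto simp: pairs_def image_iff)
  moreover have "inj_on (\<lambda>(j, i). (i, j)) (SIGMA j:{..<n}. {..<j})"
    by (auto simp: inj_on_def)
  ultimately have "(\<Sum>x\<in>pairs n. f x) = (\<Sum>(j, i)\<in>(SIGMA j:{..<n}. {..<j}). f (i, j))"
    by (simp add: sum.reindex case_prod_unfold)
  also have "\<dots> = (\<Sum>j<n. \<Sum>i<j. f (i, j))"
    by (rule sum.Sigma[symmetric]) auto
  finally show ?thesis .
qed

definition cover :: "nat set \<Rightarrow> nat \<times> nat \<Rightarrow> real" where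
  "cover S x = of_bool (fst x \<in> S) + of_bool (snd x \<in> S)"

lemma sum_lessThan_of_bool:
  fixes n :: nat
  assumes "S \<subseteq> {..<n}"
  shows "(\<Sum>i<n. of_bool (i \<in> S) :: real) = real (card S)"
proof -
  have "(\<Sum>i<n. of_bool (i \<in> S) :: real) = real (card ({..<n} \<inter> {i. i \<in> S}))"
    by (rule sum_of_bool_eq) simp_all
  also have "{..<n} \<inter> {i. i \<in> S} = S"
    using assms by auto
  finally show ?thesis .
qed

lemma sum_pairs_cover:
  assumes "S \<subseteq> {..<n}"
  shows "(\<Sum>x\<in>pairs n. cover S x) = real (card S) * (real n - 1)"
proof -
  have "(\<Sum>i<n. \<Sum>j<n. of_bool (i \<in> S) :: real)
      = (\<Sum>i<n. of_bool (i \<in> S)) + (\<Sum>x\<in>pairs n. cover S x)"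
    by (simp only: sum_square_eq_diag_plus_pairs sum_pairs cover_def fst_conv snd_conv)
  then show ?thesis
    using sum_lessThan_of_bool[OF assms] by (simp add: algebra_simps)
qed

lemma sum_pairs_both:
  assumes "S \<subseteq> {..<n}"
  shows "(\<Sum>x\<in>pairs n. of_bool (fst x \<in> S) * of_bool (snd x \<in> S))
    = (real (card S) ^ 2 - real (card S)) / 2"
proof -
  let ?ind = "\<lambda>i. of_bool (i \<in> S) :: real"
  have "(\<Sum>i<n. \<Sum>j<n. ?ind i * ?ind j)
      = (\<Sum>i<n. ?ind i * ?ind i) + (\<Sum>j<n. \<Sum>i<j. ?ind i * ?ind j + ?ind j * ?ind i)"
    by (rule sum_square_eq_diag_plus_pairs)
  moreover have "(\<Sum>i<n. \<Sum>j<n. ?ind i * ?ind j) = real (card S) ^ 2"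
    using sum_lessThan_of_bool[OF assms]
    by (simp add: sum_distrib_left[symmetric] sum_distrib_right[symmetric] power2_eq_square)
  moreover have "(\<Sum>i<n. ?ind i * ?ind i) = real (card S)"
    using sum_lessThan_of_bool[OF assms] by simp
  moreover have "(\<Sum>j<n. \<Sum>i<j. ?ind i * ?ind j + ?ind j * ?ind i)
      = (\<Sum>j<n. \<Sum>i<j. 2 * (?ind i * ?ind j))"
    by (intro sum.cong refl) simp
  moreover have "\<dots> = 2 * (\<Sum>x\<in>pairs n. of_bool (fst x \<in> S) * of_bool (snd x \<in> S))"
    by (simp only: sum_pairs fst_conv snd_conv sum_distrib_left)
  ultimately show ?thesis
    by simp
qed

lemma prob_less_le_expectation_exp:
  fixes M :: "'a pmf" and Y :: "'a \<Rightarrow> real"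
  assumes "finite (set_pmf M)" "0 \<le> s"
  shows "measure_pmf.prob M {e. Y e < T} \<le> measure_pmf.expectation M (\<lambda>e. exp (s * (T - Y e)))"
proof -
  have "measure_pmf.prob M {e. Y e < T} = measure_pmf.expectation M (indicator {e. Y e < T})"
    by simp
  also have "\<dots> \<le> measure_pmf.expectation M (\<lambda>e. exp (s * (T - Y e)))"
  proof (rule integral_mono)
    fix e
    show "indicator {e. Y e < T} e \<le> exp (s * (T - Y e))"
      using assms(2) by (cases "Y e < T") (auto simp: indicator_def)
  qed (auto intro: integrable_measure_pmf_finite[OF assms(1)])
  finally show ?thesis .
qed

lemma prob_UN_le_of_card_mult_le:
  fixes M :: "'a pmf" and E :: "'b \<Rightarrow> 'a set"
  assumes "finite I" "I \<noteq> {}" "\<And>i. i \<in> I \<Longrightarrow> real (card I) * measure_pmf.prob M (E i) \<le> \<epsilon>"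
  shows "measure_pmf.prob M (\<Union>i\<in>I. E i) \<le> \<epsilon>"
proof -
  have "real (card I) * measure_pmf.prob M (\<Union>i\<in>I. E i)
      \<le> real (card I) * (\<Sum>i\<in>I. measure_pmf.prob M (E i))"
    by (intro mult_left_mono measure_pmf.finite_measure_subadditive_finite assms(1)) auto
  also have "\<dots> \<le> (\<Sum>i\<in>I. \<epsilon>)"
    unfolding sum_distrib_left using assms(3) by (intro sum_mono)
  finally show ?thesis
    using assms(1,2) by (simp add: mult_le_cancel_left_pos card_gt_0_iff)
qed

lemma div_two_mult_less_sqrt:
  fixes C :: real and n :: nat
  assumes "0 < C" "C < real n"
  shows "C / (2 * real n) < sqrt C"
proof -
  have n: "1 \<le> real n"
    using assms by (cases n) auto
  have "sqrt (real n) \<le> real n"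
    using n by (intro real_le_lsqrt) (auto simp: power2_eq_square)
  then have "sqrt C < 2 * real n"
    using assms real_sqrt_less_mono[of C "real n"] by linarith
  then have "sqrt C * sqrt C < sqrt C * (2 * real n)"
    using assms by (intro mult_strict_left_mono) simp_all
  then show ?thesis
    using assms n by (simp add: divide_less_eq)
qed

text \<open>Applied with \<open>W = L (\<surd>(a + b) - D/2)\<close>, this describes the regime in which the Chernoff
  parameter \<open>L/4\<close> is used instead of \<open>L/2\<close>.\<close>
lemma threshold_gap_large:
  fixes \<beta> m C W :: real and k n :: nat
  assumes W: "sqrt C \<le> W" "W < real k * C / (2 * real n)"
    and k: "real k \<le> m \<or> k = 1" and m: "m = \<beta> * real n"
    and \<beta>: "0 < \<beta>" "\<beta> \<le> 1/10" and C: "0 < C" "C < real n"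
  shows "2 \<le> k" and "ln (1 / \<beta>) + 7/2 \<le> W"
proof -
  have n: "1 \<le> real n"
    using C by (cases n) auto
  have "C / (2 * real n) < sqrt C"
    using C by (rule div_two_mult_less_sqrt)
  then have "k \<noteq> 1"
    using W by auto
  moreover have "k \<noteq> 0"
  proof
    assume "k = 0"
    with W have "W < 0"
      by simp
    with W show False
      using real_sqrt_ge_zero[of C] C by linarith
  qed
  ultimately show "2 \<le> k"
    by simp
  have "sqrt C < m * C / (2 * real n)"
    using W k \<open>k \<noteq> 1\<close> C n by (smt (verit) divide_right_mono mult_right_mono of_nat_0_le_iff)
  then have "sqrt C * 1 < sqrt C * (\<beta> * sqrt C / 2)"
    using C n m by (simp add: power2_eq_square[symmetric] field_simps)
  then have "1 < \<beta> * sqrt C / 2"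
    using C by (subst (asm) mult_less_cancel_left_pos) auto
  then have "2 / \<beta> < sqrt C"
    using \<beta> by (simp add: field_simps)
  moreover have "ln (1 / \<beta>) \<le> 1 / \<beta> - 1"
    using \<beta> by (intro ln_le_minus_one) simp
  moreover have "10 \<le> 1 / \<beta>"
    using \<beta> by (simp add: field_simps)
  ultimately show "ln (1 / \<beta>) + 7/2 \<le> W"
    using W by (simp add: field_simps)
qed

lemma max_one_nat_floor:
  fixes m :: real
  assumes "0 < m" "m < real n"
  shows "1 \<le> max 1 (nat \<lfloor>m\<rfloor>)" "max 1 (nat \<lfloor>m\<rfloor>) \<le> n" "m < real (max 1 (nat \<lfloor>m\<rfloor>)) + 1"
    "real (max 1 (nat \<lfloor>m\<rfloor>)) \<le> m \<or> max 1 (nat \<lfloor>m\<rfloor>) = 1"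
  using assms by (auto simp: max_def nat_le_iff le_nat_iff floor_le_iff)

locale sbm_model =
  fixes n :: nat and a b :: real and l :: "nat \<Rightarrow> real"
  assumes b_pos: "0 < b" and b_less_a: "b < a" and a_less_n: "a < real n"
    and labels: "\<forall>i<n. l i = -1 \<or> l i = 1"
begin

definition p :: real where "p = a / real n"
definition q :: real where "q = b / real n"
definition L :: real where "L = ln (Rfun p q)"
definition D :: real where "D = Dfun p q"
definition C :: real where "C = (sqrt a - sqrt b)\<^sup>2"
definition W :: real where "W = L * (sqrt (a + b) - D / 2)"

lemma n_pos: "0 < real n"
  using b_pos b_less_a a_less_n by linarith

lemma q_pos: "0 < q" and q_less_p: "q < p" and p_less_1: "p < 1"
  using b_pos b_less_a a_less_n n_pos by (simp_all add: p_def q_def divide_strict_right_mono)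

lemma L_pos: "0 < L"
  unfolding L_def using q_pos q_less_p p_less_1 by (rule ln_Rfun_pos)

lemma sqrt_p_minus_sqrt_q: "(sqrt p - sqrt q)\<^sup>2 = C / real n"
  using n_pos by (simp add: p_def q_def C_def real_sqrt_divide diff_divide_distrib[symmetric] power_divide)

lemma label_square: "i < n \<Longrightarrow> l i * l i = 1"
  using labels by force

definition score :: "(nat \<Rightarrow> nat \<Rightarrow> real) \<Rightarrow> nat \<Rightarrow> real" where
  "score A i = (\<Sum>j<n. (A i j - D) * (l i * l j))"

lemma frob_eq_sum_score:
  "frob n (\<lambda>i j. (A i j - D) * (l i * l j)) (\<lambda>i j. x i) = (\<Sum>i<n. x i * score A i)"
  unfolding frob_def score_def by (simp add: sum_distrib_left ac_simps)

definition edge_term :: "(nat \<times> nat \<Rightarrow> bool) \<Rightarrow> nat \<times> nat \<Rightarrow> real" where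
  "edge_term e x = (of_bool (e x) - D) * (l (fst x) * l (snd x))"

lemma sum_score_adj:
  assumes S: "S \<subseteq> {..<n}"
  shows "(\<Sum>i\<in>S. score (adj e) i) = - real (card S) * D + (\<Sum>x\<in>pairs n. cover S x * edge_term e x)"
proof -
  define g where "g i j = of_bool (i \<in> S) * ((adj e i j - D) * (l i * l j))" for i j
  have "(\<Sum>i\<in>S. score (adj e) i) = (\<Sum>i<n. \<Sum>j<n. g i j)"
    using S by (simp add: g_def score_def sum_distrib_left[symmetric] Int_absorb1)
  also have "\<dots> = (\<Sum>i<n. g i i) + (\<Sum>j<n. \<Sum>i<j. g i j + g j i)"
    by (rule sum_square_eq_diag_plus_pairs)
  also have "(\<Sum>i<n. g i i) = (\<Sum>i<n. of_bool (i \<in> S) * (- D))"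
    by (intro sum.cong) (auto simp: g_def adj_def label_square)
  also have "\<dots> = (\<Sum>i<n. of_bool (i \<in> S)) * (- D)"
    by (simp only: sum_distrib_right)
  also have "\<dots> = - real (card S) * D"
    by (simp add: sum_lessThan_of_bool[OF S])
  also have "(\<Sum>j<n. \<Sum>i<j. g i j + g j i) = (\<Sum>x\<in>pairs n. cover S x * edge_term e x)"
    unfolding sum_pairs
    by (intro sum.cong refl) (auto simp: g_def cover_def edge_term_def adj_def algebra_simps)
  finally show ?thesis .
qed

definition edge_pmf :: "nat \<times> nat \<Rightarrow> bool pmf" where
  "edge_pmf x = bernoulli_pmf (if l (fst x) = l (snd x) then p else q)"

lemma sbm_edges_eq: "sbm_edges n a b l = Pi_pmf (pairs n) False edge_pmf"
  unfolding sbm_edges_def pairs_def edge_pmf_def p_def q_def by (simp add: case_prod_unfold)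

lemma finite_set_pmf_sbm_edges: "finite (set_pmf (sbm_edges n a b l))"
  unfolding sbm_edges_eq set_Pi_pmf[OF finite_pairs]
  by (rule finite_PiE_dflt) (auto simp: finite_pairs intro: finite_subset[of _ UNIV])

definition edge_mgf :: "real \<Rightarrow> nat \<times> nat \<Rightarrow> real" where
  "edge_mgf \<theta> x = measure_pmf.expectation (edge_pmf x)
     (\<lambda>v. exp (- (\<theta> * L * ((of_bool v - D) * (l (fst x) * l (snd x))))))"

lemma edge_mgf_eq_hellinger:
  assumes "x \<in> pairs n"
  shows "edge_mgf \<theta> x = (if l (fst x) = l (snd x) then hellinger \<theta> p q else hellinger \<theta> q p)"
proof -
  have "fst x < n" "snd x < n"
    using assms by (auto simp: pairs_def)
  then have "l (fst x) * l (snd x) = (if l (fst x) = l (snd x) then 1 else -1)"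
    using labels[rule_format, of "fst x"] labels[rule_format, of "snd x"] by auto
  moreover have "(\<lambda>v. exp (- (\<theta> * L * (D - of_bool v)))) = (\<lambda>v. exp (\<theta> * L * (of_bool v - D)))"
    by (simp add: algebra_simps)
  ultimately show ?thesis
    using expectation_exp_same_community[OF q_pos q_less_p p_less_1, of \<theta>]
      expectation_exp_other_community[OF q_pos q_less_p p_less_1, of \<theta>]
    by (simp add: edge_mgf_def edge_pmf_def L_def D_def)
qed

lemma edge_mgf_one: "x \<in> pairs n \<Longrightarrow> edge_mgf 1 x = 1"
  using q_pos q_less_p p_less_1 by (simp add: edge_mgf_eq_hellinger hellinger_1)

lemma edge_mgf_le:
  assumes "x \<in> pairs n" "0 \<le> \<theta>" "\<theta> \<le> 1/2"
  shows "edge_mgf \<theta> x \<le> exp (- \<theta> * (sqrt p - sqrt q)\<^sup>2)"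
  using hellinger_le[of p q \<theta>] hellinger_le[of q p \<theta>] q_pos q_less_p p_less_1 assms
  by (simp add: edge_mgf_eq_hellinger power2_commute)

lemma edge_mgf_nonneg: "0 \<le> edge_mgf \<theta> x"
  unfolding edge_mgf_def by (intro Bochner_Integration.integral_nonneg) simp

lemma prob_sum_score_less_le:
  assumes S: "S \<subseteq> {..<n}" and \<theta>: "0 \<le> \<theta>"
  shows "measure_pmf.prob (sbm_edges n a b l) {e. (\<Sum>i\<in>S. score (adj e) i) < T}
    \<le> exp (\<theta> * L * (T + real (card S) * D)) * (\<Prod>x\<in>pairs n. edge_mgf (\<theta> * cover S x) x)"
proof -
  let ?M = "sbm_edges n a b l"
  let ?f = "\<lambda>x v. exp (- (\<theta> * cover S x * L * ((of_bool v - D) * (l (fst x) * l (snd x)))))"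
  have "\<theta> * L * (T - (\<Sum>i\<in>S. score (adj e) i))
      = \<theta> * L * (T + real (card S) * D) + (\<Sum>x\<in>pairs n. - (\<theta> * cover S x * L * edge_term e x))" for e
    by (simp add: sum_score_adj[OF S] sum_distrib_left sum_negf algebra_simps)
  then have exp_eq: "exp (\<theta> * L * (T - (\<Sum>i\<in>S. score (adj e) i)))
      = exp (\<theta> * L * (T + real (card S) * D)) * (\<Prod>x\<in>pairs n. ?f x (e x))" for e
    by (simp add: exp_add exp_sum finite_pairs edge_term_def)
  have "measure_pmf.prob ?M {e. (\<Sum>i\<in>S. score (adj e) i) < T}
      \<le> measure_pmf.expectation ?M (\<lambda>e. exp (\<theta> * L * (T - (\<Sum>i\<in>S. score (adj e) i))))"
    using finite_set_pmf_sbm_edges \<theta> L_pos by (intro prob_less_le_expectation_exp) auto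
  also have "\<dots> = exp (\<theta> * L * (T + real (card S) * D))
      * measure_pmf.expectation (Pi_pmf (pairs n) False edge_pmf) (\<lambda>e. \<Prod>x\<in>pairs n. ?f x (e x))"
    by (simp add: exp_eq sbm_edges_eq)
  also have "measure_pmf.expectation (Pi_pmf (pairs n) False edge_pmf) (\<lambda>e. \<Prod>x\<in>pairs n. ?f x (e x))
      = (\<Prod>x\<in>pairs n. edge_mgf (\<theta> * cover S x) x)"
    by (subst expectation_prod_Pi_pmf[OF finite_pairs])
       (auto simp: edge_mgf_def intro!: integrable_measure_pmf_finite)
  finally show ?thesis .
qed

lemma C_pos: "0 < C" and C_less_n: "C < real n"
proof -
  have "sqrt b < sqrt a" "0 < sqrt b"
    using b_pos b_less_a by simp_all
  then have "0 < C" "C \<le> (sqrt a)\<^sup>2"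
    unfolding C_def by (simp, intro power_mono) auto
  then show "0 < C" "C < real n"
    using b_pos b_less_a a_less_n by simp_all
qed

lemma sqrt_C_le_W: "sqrt C \<le> W"
proof -
  have a: "0 < a" "0 < sqrt a"
    using b_pos b_less_a by simp_all
  have "ln (sqrt b / sqrt a) \<le> sqrt b / sqrt a - 1"
    using a b_pos by (intro ln_le_minus_one) simp
  moreover have "ln p - ln q = 2 * ln (sqrt a / sqrt b)"
    using a b_pos n_pos by (simp add: p_def q_def ln_div ln_sqrt)
  moreover have "ln (sqrt b / sqrt a) = - ln (sqrt a / sqrt b)"
    using a b_pos by (simp add: ln_div)
  ultimately have L_ge: "2 * (1 - sqrt b / sqrt a) \<le> L"
    using ln_ratio_le_ln_Rfun[OF q_pos q_less_p p_less_1] by (simp add: L_def)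
  have "p \<le> a"
    using a a_less_n n_pos by (simp add: p_def divide_le_eq)
  moreover have "p * p \<le> p * 1"
    using p_less_1 q_pos q_less_p by (intro mult_left_mono) auto
  ultimately have "p \<le> sqrt a"
    by (intro real_le_rsqrt) (simp add: power2_eq_square)
  moreover have "sqrt a \<le> sqrt (a + b)"
    using b_pos by simp
  ultimately have "sqrt a / 2 \<le> sqrt (a + b) - D / 2"
    using Dfun_le[OF q_pos q_less_p p_less_1] unfolding D_def by linarith
  have "sqrt C = 2 * (1 - sqrt b / sqrt a) * (sqrt a / 2)"
    using a b_pos b_less_a by (simp add: C_def field_simps)
  also have "\<dots> \<le> W"
    unfolding W_def using L_ge \<open>sqrt a / 2 \<le> sqrt (a + b) - D / 2\<close> a b_pos b_less_a L_pos by (intro mult_mono) (auto simp: field_simps)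
  finally show ?thesis .
qed

lemma prob_sum_score_less_half:
  assumes S: "S \<subseteq> {..<n}"
  shows "measure_pmf.prob (sbm_edges n a b l) {e. (\<Sum>i\<in>S. score (adj e) i) < real (card S) * t}
    \<le> exp (real (card S) * (L / 2 * (t + D) - C / 2 + real (card S) * C / (2 * real n)))"
proof -
  let ?c = "(sqrt p - sqrt q)\<^sup>2" and ?k = "real (card S)"
  let ?both = "\<lambda>x. of_bool (fst x \<in> S) * of_bool (snd x \<in> S) :: real"
  have "edge_mgf (1/2 * cover S x) x \<le> exp (- ?c * (cover S x / 2 - ?both x))" if "x \<in> pairs n" for x
    using edge_mgf_le[OF that, of 0] edge_mgf_le[OF that, of "1/2"] edge_mgf_one[OF that]
    by (cases "fst x \<in> S"; cases "snd x \<in> S") (simp_all add: cover_def)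
  then have "(\<Prod>x\<in>pairs n. edge_mgf (1/2 * cover S x) x)
      \<le> (\<Prod>x\<in>pairs n. exp (- ?c * (cover S x / 2 - ?both x)))"
    by (intro prod_mono) (auto simp: edge_mgf_nonneg)
  also have "\<dots> = exp (\<Sum>x\<in>pairs n. - ?c * (cover S x / 2 - ?both x))"
    by (simp add: exp_sum finite_pairs)
  also have "(\<Sum>x\<in>pairs n. - ?c * (cover S x / 2 - ?both x))
      = - ?c * ((\<Sum>x\<in>pairs n. cover S x) / 2 - (\<Sum>x\<in>pairs n. ?both x))"
    by (simp only: sum_distrib_left[symmetric] sum_subtractf sum_divide_distrib[symmetric])
  also have "\<dots> = - C / real n * (?k * (real n - 1) / 2 - (?k ^ 2 - ?k) / 2)"
    by (simp only: sum_pairs_cover[OF S] sum_pairs_both[OF S] sqrt_p_minus_sqrt_q)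
  finally have "measure_pmf.prob (sbm_edges n a b l) {e. (\<Sum>i\<in>S. score (adj e) i) < ?k * t}
      \<le> exp (1/2 * L * (?k * t + ?k * D)) * exp (- C / real n * (?k * (real n - 1) / 2 - (?k ^ 2 - ?k) / 2))"
    using prob_sum_score_less_le[OF S, of "1/2" "?k * t"] by (auto elim!: order.trans intro!: mult_left_mono)
  also have "\<dots> = exp (?k * (L / 2 * (t + D) - C / 2 + ?k * C / (2 * real n)))"
    using n_pos by (simp add: mult_exp_exp field_simps power2_eq_square)
  finally show ?thesis .
qed

lemma prob_sum_score_less_quarter:
  assumes S: "S \<subseteq> {..<n}"
  shows "measure_pmf.prob (sbm_edges n a b l) {e. (\<Sum>i\<in>S. score (adj e) i) < real (card S) * t}
    \<le> exp (real (card S) * (L / 4 * (t + D) - C / 4 + C / (4 * real n)))"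
proof -
  let ?c = "(sqrt p - sqrt q)\<^sup>2" and ?k = "real (card S)"
  have "edge_mgf (1/4 * cover S x) x \<le> exp (- ?c * (cover S x / 4))" if "x \<in> pairs n" for x
    using edge_mgf_le[OF that, of "1/4 * cover S x"]
    by (auto simp: cover_def)
  then have "(\<Prod>x\<in>pairs n. edge_mgf (1/4 * cover S x) x) \<le> (\<Prod>x\<in>pairs n. exp (- ?c * (cover S x / 4)))"
    by (intro prod_mono) (auto simp: edge_mgf_nonneg)
  also have "\<dots> = exp (\<Sum>x\<in>pairs n. - ?c * (cover S x / 4))"
    by (simp add: exp_sum finite_pairs)
  also have "(\<Sum>x\<in>pairs n. - ?c * (cover S x / 4)) = - ?c * ((\<Sum>x\<in>pairs n. cover S x) / 4)"
    by (simp only: sum_distrib_left[symmetric] sum_divide_distrib[symmetric])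
  also have "\<dots> = - C / real n * (?k * (real n - 1) / 4)"
    by (simp only: sum_pairs_cover[OF S] sqrt_p_minus_sqrt_q)
  finally have "measure_pmf.prob (sbm_edges n a b l) {e. (\<Sum>i\<in>S. score (adj e) i) < ?k * t}
      \<le> exp (1/4 * L * (?k * t + ?k * D)) * exp (- C / real n * (?k * (real n - 1) / 4))"
    using prob_sum_score_less_le[OF S, of "1/4" "?k * t"] by (auto elim!: order.trans intro!: mult_left_mono)
  also have "\<dots> = exp (?k * (L / 4 * (t + D) - C / 4 + C / (4 * real n)))"
    using n_pos by (simp add: mult_exp_exp field_simps)
  finally show ?thesis .
qed

lemma prob_weighted_score_ge:
  fixes m t \<epsilon> :: real and k :: nat
  assumes k: "1 \<le> k" "k \<le> n" "real k \<le> m \<or> k = 1"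
    and tail: "\<And>S. S \<subseteq> {..<n} \<Longrightarrow> card S = k \<Longrightarrow> real (n choose k)
      * measure_pmf.prob (sbm_edges n a b l) {e. (\<Sum>i\<in>S. score (adj e) i) < real k * t} \<le> \<epsilon>"
  shows "1 - \<epsilon> \<le> measure_pmf.prob (SBM n a b l)
    {A. \<forall>x. (\<forall>i<n. 0 \<le> x i \<and> x i \<le> 1) \<and> (\<Sum>i<n. x i) = m \<longrightarrow> m * t \<le> (\<Sum>i<n. x i * score A i)}"
    (is "_ \<le> measure_pmf.prob _ ?G")
proof -
  let ?M = "sbm_edges n a b l"
  define Ks where "Ks = {S. S \<subseteq> {..<n} \<and> card S = k}"
  define Bad where "Bad = (\<Union>S\<in>Ks. {e. (\<Sum>i\<in>S. score (adj e) i) < real k * t})"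
  have bad: "UNIV - adj -` ?G \<subseteq> Bad"
  proof
    fix e assume "e \<in> UNIV - adj -` ?G"
    then obtain x where x: "\<forall>i<n. 0 \<le> x i \<and> x i \<le> 1" "(\<Sum>i<n. x i) = m"
      and small: "\<not> m * t \<le> (\<Sum>i<n. x i * score (adj e) i)"
      by auto
    have "\<exists>S. S \<subseteq> {..<n} \<and> card S = k \<and> (\<Sum>i\<in>S. score (adj e) i) < real k * t"
    proof (rule ccontr)
      assume "\<nexists>S. S \<subseteq> {..<n} \<and> card S = k \<and> (\<Sum>i\<in>S. score (adj e) i) < real k * t"
      then have "m * t \<le> (\<Sum>i<n. x i * score (adj e) i)"
        using x by (intro weighted_sum_ge_of_subset_sums[OF k]) (auto simp: not_less)
      with small show False ..
    qed
    then show "e \<in> Bad"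
      unfolding Bad_def Ks_def by blast
  qed
  have "finite Ks" "card Ks = n choose k"
    using n_subsets[of "{..<n}" k] unfolding Ks_def
    by (auto intro: finite_subset[of _ "Pow {..<n}"])
  moreover have "Ks \<noteq> {}"
    using \<open>card Ks = n choose k\<close> k(2) by auto
  ultimately have "measure_pmf.prob ?M Bad \<le> \<epsilon>"
    unfolding Bad_def using tail by (intro prob_UN_le_of_card_mult_le) (auto simp: Ks_def)
  moreover have "measure_pmf.prob (SBM n a b l) ?G = 1 - measure_pmf.prob ?M (UNIV - adj -` ?G)"
    unfolding SBM_def measure_map_pmf using measure_pmf.prob_compl[of "adj -` ?G" ?M] by simp
  moreover have "measure_pmf.prob ?M (UNIV - adj -` ?G) \<le> measure_pmf.prob ?M Bad"
    using bad by (rule measure_pmf.finite_measure_mono) simp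
  ultimately show ?thesis
    by linarith
qed

definition threshold :: "real \<Rightarrow> real \<Rightarrow> real" where
  "threshold \<beta> \<kappa> = 2 * ((C / 2 - ln (1 / \<beta>) - 3 * \<kappa>) / L - sqrt (a + b))"

lemma half_L_threshold: "L / 2 * (threshold \<beta> \<kappa> + D) = C / 2 - ln (1 / \<beta>) - 3 * \<kappa> - W"
  using L_pos by (simp add: threshold_def W_def field_simps)

lemma choose_mult_prob_sum_score_less_small:
  assumes \<beta>: "0 < \<beta>" and \<kappa>: "1 \<le> \<kappa>" and k: "1 \<le> k" "\<beta> * real n < real k + 1"
    and S: "S \<subseteq> {..<n}" "card S = k" and small: "real k * C / (2 * real n) \<le> W"
  shows "real (n choose k) * measure_pmf.prob (sbm_edges n a b l)
    {e. (\<Sum>i\<in>S. score (adj e) i) < real k * threshold \<beta> \<kappa>} \<le> exp (- \<kappa> * (\<beta> * real n))"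
proof -
  let ?t = "threshold \<beta> \<kappa>"
  have "real (n choose k) * measure_pmf.prob (sbm_edges n a b l)
        {e. (\<Sum>i\<in>S. score (adj e) i) < real k * ?t}
      \<le> real (n choose k) * exp (real k * (L / 2 * (?t + D) - C / 2 + real k * C / (2 * real n)))"
    using prob_sum_score_less_half[OF S(1)] by (intro mult_left_mono) (simp_all add: S(2))
  also have "\<dots> \<le> exp (- \<kappa> * (\<beta> * real n))"
  proof (rule choose_mult_exp_le[where s = 3])
    show "L / 2 * (?t + D) - C / 2 + real k * C / (2 * real n) \<le> - (ln (1 / \<beta>) + \<kappa> * 3 + 3 - 3)"
      using small half_L_threshold[of \<beta> \<kappa>] by linarith
  qed (use \<beta> \<kappa> k n_pos in auto)
  finally show ?thesis .
qed

lemma choose_mult_prob_sum_score_less_large: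
  assumes \<beta>: "0 < \<beta>" "\<beta> \<le> 1/10" and \<kappa>: "1 \<le> \<kappa>"
    and k: "\<beta> * real n < real k + 1" "real k \<le> \<beta> * real n \<or> k = 1"
    and S: "S \<subseteq> {..<n}" "card S = k" and large: "W < real k * C / (2 * real n)"
  shows "real (n choose k) * measure_pmf.prob (sbm_edges n a b l)
    {e. (\<Sum>i\<in>S. score (adj e) i) < real k * threshold \<beta> \<kappa>} \<le> exp (- \<kappa> * (\<beta> * real n))"
proof -
  let ?t = "threshold \<beta> \<kappa>"
  have "2 \<le> k" "ln (1 / \<beta>) + 7/2 \<le> W"
    using threshold_gap_large[OF sqrt_C_le_W large k(2) refl \<beta> C_pos C_less_n] by simp_all
  have "C / (4 * real n) < 1/4"
    using C_less_n n_pos by (simp add: field_simps)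
  have "L / 4 * (?t + D) = L / 2 * (?t + D) / 2"
    by simp
  have "real (n choose k) * measure_pmf.prob (sbm_edges n a b l)
        {e. (\<Sum>i\<in>S. score (adj e) i) < real k * ?t}
      \<le> real (n choose k) * exp (real k * (L / 4 * (?t + D) - C / 4 + C / (4 * real n)))"
    using prob_sum_score_less_quarter[OF S(1)] by (intro mult_left_mono) (simp_all add: S(2))
  also have "\<dots> \<le> exp (- \<kappa> * (\<beta> * real n))"
  proof (rule choose_mult_exp_le[where s = "3/2"])
    show "L / 4 * (?t + D) - C / 4 + C / (4 * real n) \<le> - (ln (1 / \<beta>) + \<kappa> * (3/2) + 3 - 3/2)"
      using \<open>ln (1 / \<beta>) + 7/2 \<le> W\<close> \<open>C / (4 * real n) < 1/4\<close> half_L_threshold[of \<beta> \<kappa>]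
        \<open>L / 4 * (?t + D) = L / 2 * (?t + D) / 2\<close> by linarith
    show "\<beta> * real n \<le> 3/2 * real k"
      using \<open>2 \<le> k\<close> k(1) by simp
  qed (use \<beta> \<kappa> k \<open>2 \<le> k\<close> n_pos in auto)
  finally show ?thesis .
qed

lemma prob_weighted_score_ge_threshold:
  fixes \<beta> \<kappa> :: real
  assumes \<beta>: "0 < \<beta>" "\<beta> \<le> 1/10" and \<kappa>: "1 \<le> \<kappa>"
  shows "1 - exp (- \<kappa> * \<beta> * real n) \<le> measure_pmf.prob (SBM n a b l)
    {A. \<forall>x. ((\<forall>i<n. 0 \<le> x i \<and> x i \<le> 1) \<and> (\<Sum>i<n. x i) = \<beta> * real n) \<longrightarrow>
       (\<Sum>i<n. x i * score A i) \<ge> 2 * \<beta> * real n * ((C / 2 - ln (1 / \<beta>) - 3 * \<kappa>) / L - sqrt (a + b))}"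
proof -
  define k where "k = max 1 (nat \<lfloor>\<beta> * real n\<rfloor>)"
  have "0 < \<beta> * real n" "\<beta> * real n < real n"
    using \<beta> n_pos by simp_all
  then have k: "1 \<le> k" "k \<le> n" "\<beta> * real n < real k + 1" "real k \<le> \<beta> * real n \<or> k = 1"
    unfolding k_def by (rule max_one_nat_floor)+
  have "1 - exp (- \<kappa> * (\<beta> * real n)) \<le> measure_pmf.prob (SBM n a b l)
    {A. \<forall>x. (\<forall>i<n. 0 \<le> x i \<and> x i \<le> 1) \<and> (\<Sum>i<n. x i) = \<beta> * real n
       \<longrightarrow> \<beta> * real n * threshold \<beta> \<kappa> \<le> (\<Sum>i<n. x i * score A i)}"
  proof (rule prob_weighted_score_ge[OF k(1,2,4)])
    fix S assume S: "S \<subseteq> {..<n}" "card S = k"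
    show "real (n choose k) * measure_pmf.prob (sbm_edges n a b l)
        {e. (\<Sum>i\<in>S. score (adj e) i) < real k * threshold \<beta> \<kappa>} \<le> exp (- \<kappa> * (\<beta> * real n))"
    proof (cases "real k * C / (2 * real n) \<le> W")
      case True
      with \<beta> \<kappa> k S show ?thesis
        by (intro choose_mult_prob_sum_score_less_small)
    next
      case False
      with \<beta> \<kappa> k S show ?thesis
        by (intro choose_mult_prob_sum_score_less_large) simp_all
    qed
  qed
  moreover have "2 * \<beta> * real n * ((C / 2 - ln (1 / \<beta>) - 3 * \<kappa>) / L - sqrt (a + b))
      = \<beta> * real n * threshold \<beta> \<kappa>"
    by (simp add: threshold_def)
  ultimately show ?thesis
    by (simp only: mult.assoc)
qed

end

theorem mainTheorem7:
  fixes n :: nat and a b \<beta> \<kappa> :: real and l :: "nat \<Rightarrow> real"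
  assumes "0 < b" "b < a" "a < real n"
    and "\<forall>i<n. l i = -1 \<or> l i = 1"
    and "0 < \<beta>" "\<beta> < 10 powr (-6)" "\<kappa> \<ge> 1"
  shows "measure_pmf.prob (SBM n a b l)
     {A. \<forall>x :: nat \<Rightarrow> real.
          ((\<forall>i<n. 0 \<le> x i \<and> x i \<le> 1) \<and> (\<Sum>i<n. x i) = \<beta> * real n) \<longrightarrow>
          frob n (\<lambda>i j. (A i j - Dfun (a / real n) (b / real n) * 1) * (l i * l j)) (\<lambda>i j. x i)
            \<ge> 2 * \<beta> * real n *
              (((sqrt a - sqrt b)\<^sup>2 / 2 - ln (1 / \<beta>) - 3 * \<kappa>) / ln (Rfun (a / real n) (b / real n))
               - sqrt (a + b))}
     \<ge> 1 - exp (- \<kappa> * \<beta> * real n) - 1 / real n ^ 3"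
proof -
  interpret sbm_model n a b l
    using assms(1-4) by unfold_locales
  have "\<beta> \<le> 1/10"
    using assms(6) powr_mono[of "-6" "-1" "10::real"] by (simp add: powr_minus)
  with assms(5,7) have "1 - exp (- \<kappa> * \<beta> * real n) \<le> measure_pmf.prob (SBM n a b l)
    {A. \<forall>x. ((\<forall>i<n. 0 \<le> x i \<and> x i \<le> 1) \<and> (\<Sum>i<n. x i) = \<beta> * real n) \<longrightarrow>
       (\<Sum>i<n. x i * score A i) \<ge> 2 * \<beta> * real n * ((C / 2 - ln (1 / \<beta>) - 3 * \<kappa>) / L - sqrt (a + b))}"
    by (intro prob_weighted_score_ge_threshold) simp_all
  moreover have "Dfun (a / real n) (b / real n) = D" "ln (Rfun (a / real n) (b / real n)) = L"
    "(sqrt a - sqrt b)\<^sup>2 = C"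
    by (simp_all add: D_def L_def p_def q_def C_def)
  \<comment> \<open>the bound holds even without the slack term \<open>1 / n\<^sup>3\<close>\<close>
  moreover have "0 \<le> 1 / real n ^ 3"
    by simp
  ultimately show ?thesis
    by (simp only: mult_1_right frob_eq_sum_score)
qed

end
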